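(* Let $A\in\mathbb{R}^{n\times n}$, $B\in\mathbb{R}^{n\times m}$, let $N\geq n+m$, and for $i=1,\dots,N$ let $x_{i,1},x_{i,2}\in\mathbb{R}^{n}$, $u_{i,1}\in\mathbb{R}^{m}$ satisfy $x_{i,2}=Ax_{i,1}+Bu_{i,1}$. Put $X_{N,1}:=(x_{1,1},\dots,x_{N,1})^{\top}$, $X_{N,2}:=(x_{1,2},\dots,x_{N,2})^{\top}$ (both in $\mathbb{R}^{N\times n}$), $U_{N,1}:=(u_{1,1},\dots,u_{N,1})^{\top}\in\mathbb{R}^{N\times m}$, and $Z_{N,2}:=X_{N,1}A$. Suppose that $\operatorname{rank}\begin{pmatrix}X_{N,1} & U_{N,1}\end{pmatrix}=n+m$, $\operatorname{rank}X_{N,1}=n$, and $\operatorname{rank}U_{N,1}=m$. Then: (i) the equation $X_{N,1}U_{B_{N,1}}^{\top}=X_{N,1}X_{N,2}^{\top}-Z_{N,2}X_{N,1}^{\top}$ in the unknown $U_{B_{N,1}}\in\mathbb{R}^{N\times n}$ has the unique solution $U_{B_{N,1}}=U_{N,1}B^{\top}$; (ii) for every $S\in\mathbb{R}^{n\times r}$, with $U_{B_{N,1}}=U_{N,1}B^{\top}$, the equation $U_{N,1}S_{B}=U_{B_{N,1}}S$ in the unknown $S_{B}\in\mathbb{R}^{m\times r}$ has the unique solution $S_{B}=B^{\top}S$. *)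

theory Defs
  imports "HOL-Analysis.Analysis"
begin

definition hblock :: "real^'n^'N \<Rightarrow> real^'m^'N \<Rightarrow> real^('n + 'm)^'N" where
  "hblock X U = (\<chi> i j. case j of Inl a \<Rightarrow> X $ i $ a | Inr b \<Rightarrow> U $ i $ b)"

end

theory Submission
  imports Defs
begin

text \<open>Stacking the transitions \<open>x2 i = A x1 i + B u1 i\<close> as rows gives
  \<open>X2 = X1 A\<^sup>T + U1 B\<^sup>T\<close>, hence \<open>X1 X2\<^sup>T - Z2 X1\<^sup>T = X1 (U1 B\<^sup>T)\<^sup>T\<close>.
  Both equations of the theorem then have the form \<open>X P = X Q\<close> with \<open>X\<close> of full
  column rank; such an \<open>X\<close> has a left inverse, so \<open>P = Q\<close>.\<close>

lemma matrix_mul_left_cancel_full_rank: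
  fixes X :: "real^'n^'N"
  assumes "rank X = CARD('n)"
  shows "X ** P = X ** Q \<longleftrightarrow> P = Q"
proof
  assume XP_XQ: "X ** P = X ** Q"
  from assms have "inj ((*v) X)" by (simp add: full_rank_injective)
  then obtain L where L: "L ** X = mat 1"
    using matrix_left_invertible_injective by blast
  have "L ** (X ** P) = L ** (X ** Q)" using XP_XQ by simp
  then show "P = Q" by (simp add: matrix_mul_assoc L)
qed simp

lemma transpose_add: "transpose (P + Q) = transpose P + transpose Q"
  by (simp add: vec_eq_iff transpose_def)

lemma stacked_linear_rows:
  fixes A :: "'a::comm_semiring_1^'n^'k" and B :: "'a^'m^'k"
  shows "(\<chi> i. A *v x i + B *v u i) = (\<chi> i. x i) ** transpose A + (\<chi> i. u i) ** transpose B"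
  by (simp add: vec_eq_iff matrix_matrix_mult_def matrix_vector_mult_def
      transpose_def mult.commute)

theorem lemma3:
  fixes A :: "real^'n^'n" and B :: "real^'m^'n"
    and x1 x2 :: "'N::finite \<Rightarrow> real^'n" and u1 :: "'N \<Rightarrow> real^'m"
    and X1 X2 Z2 :: "real^'n^'N" and U1 :: "real^'m^'N"
  assumes N_ge: "CARD('N) \<ge> CARD('n) + CARD('m)"
    and dyn: "\<And>i. x2 i = A *v x1 i + B *v u1 i"
    and X1_def: "X1 = (\<chi> i. x1 i)"
    and X2_def: "X2 = (\<chi> i. x2 i)"
    and U1_def: "U1 = (\<chi> i. u1 i)"
    and Z2_def: "Z2 = X1 ** A"
    and rk_XU: "rank (hblock X1 U1) = CARD('n) + CARD('m)"
    and rk_X: "rank X1 = CARD('n)"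
    and rk_U: "rank U1 = CARD('m)"
  shows "(\<forall>UB :: real^'n^'N.
            X1 ** transpose UB = X1 ** transpose X2 - Z2 ** transpose X1
            \<longleftrightarrow> UB = U1 ** transpose B)
       \<and> (\<forall>(S :: real^'r^'n) (SB :: real^'r^'m).
            U1 ** SB = (U1 ** transpose B) ** S \<longleftrightarrow> SB = transpose B ** S)"
proof -
  have "X2 = X1 ** transpose A + U1 ** transpose B"
    unfolding X2_def X1_def U1_def dyn by (rule stacked_linear_rows)
  then have rhs: "X1 ** transpose X2 - Z2 ** transpose X1 = X1 ** transpose (U1 ** transpose B)"
    by (simp add: Z2_def transpose_add matrix_add_ldistrib matrix_mul_assoc
        matrix_transpose_mul)
  have "X1 ** transpose UB = X1 ** transpose X2 - Z2 ** transpose X1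
          \<longleftrightarrow> UB = U1 ** transpose B" for UB :: "real^'n^'N"
    by (metis rhs matrix_mul_left_cancel_full_rank[OF rk_X] transpose_transpose)
  moreover have "U1 ** SB = (U1 ** transpose B) ** S \<longleftrightarrow> SB = transpose B ** S"
    for S :: "real^'r^'n" and SB :: "real^'r^'m"
    by (simp add: matrix_mul_assoc[symmetric] matrix_mul_left_cancel_full_rank[OF rk_U])
  ultimately show ?thesis by blast
qed

end
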